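(* Let $k\ge2$, $\lambda>0$, $0<\theta<1$, $a=\lambda^{1/k}$, and $\gamma(u)=a(1+\theta)-u+\frac{u-a\theta}{1+u^k}$, which maps $[a\theta,a]$ into itself and has a unique fixed point $\xi\in(a\theta,a)$. If either $\theta\ge\frac{k-1}{k}$, or $\theta<\frac{k-1}{k}$ and $\lambda<\frac{1}{k-1-k\theta}$, then $\lim_{n\to\infty}\gamma^{(n)}(\xi_0)=\xi$ for every $\xi_0\in[a\theta,a]$, where $\gamma^{(n)}$ denotes the $n$-fold iterate of $\gamma$. *)

theory Defs
  imports "HOL-Analysis.Analysis"
begin

definition gammaMap :: "nat \<Rightarrow> real \<Rightarrow> real \<Rightarrow> real \<Rightarrow> real" where
  "gammaMap k lam th u =
     (let a = root k lam in a * (1 + th) - u + (u - a * th) / (1 + u ^ k))"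

end

theory Submission
  imports Defs
begin

text \<open>
  On \<open>[a\<theta>, a]\<close> the derivative of \<open>\<gamma>\<close> is \<open>-1 + N(u) / (1 + u^k)^2\<close>, where
  \<open>N(u) = 1 + u^(k-1) (k a\<theta> - (k-1) u) \<ge> 1 - \<lambda> max 0 (k - 1 - k\<theta>) =: c\<close>,
  and \<open>c > 0\<close> is exactly the hypothesis on \<open>\<theta>\<close> and \<open>\<lambda>\<close>. Since also
  \<open>N(u) \<le> (1 + u^k)^2 \<le> (1 + \<lambda>)^2\<close>, the derivative lies in \<open>[c/(1+\<lambda>)^2 - 1, 0]\<close>,
  so \<open>\<gamma>\<close> is a contraction of \<open>[a\<theta>, a]\<close>. The Banach fixed-point theorem yields
  the fixed point and the convergence of all iterates, and \<open>\<gamma>(a\<theta>) > a\<theta>\<close>,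
  \<open>\<gamma>(a) < a\<close> put the fixed point in the open interval.
\<close>

lemma contraction_iterates_tendsto_fixpoint:
  fixes f :: "'a::metric_space \<Rightarrow> 'a"
  assumes maps: "f ` S \<subseteq> S" and L: "0 \<le> L" "L < 1"
    and contr: "\<And>x y. x \<in> S \<Longrightarrow> y \<in> S \<Longrightarrow> dist (f x) (f y) \<le> L * dist x y"
    and fixed: "\<xi> \<in> S" "f \<xi> = \<xi>" and "x \<in> S"
  shows "(\<lambda>n. (f ^^ n) x) \<longlonglongrightarrow> \<xi>"
proof -
  have iter: "(f ^^ n) x \<in> S \<and> dist ((f ^^ n) x) \<xi> \<le> L ^ n * dist x \<xi>" for n
  proof (induction n)
    case 0
    show ?case using \<open>x \<in> S\<close> by simp
  next
    case (Suc n)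
    have "dist ((f ^^ Suc n) x) \<xi> = dist (f ((f ^^ n) x)) (f \<xi>)"
      using fixed by simp
    also have "\<dots> \<le> L * dist ((f ^^ n) x) \<xi>"
      using Suc.IH fixed by (intro contr) auto
    also have "\<dots> \<le> L * (L ^ n * dist x \<xi>)"
      using Suc.IH L by (intro mult_left_mono) auto
    finally have "dist ((f ^^ Suc n) x) \<xi> \<le> L ^ Suc n * dist x \<xi>"
      by (simp add: mult.assoc)
    moreover have "(f ^^ Suc n) x \<in> S"
      using Suc.IH maps by auto
    ultimately show ?case by blast
  qed
  have "(\<lambda>n. L ^ n * dist x \<xi>) \<longlonglongrightarrow> 0"
    using LIMSEQ_realpow_zero[OF L] by (rule tendsto_mult_left_zero)
  moreover have "\<forall>\<^sub>F n in sequentially. norm (dist ((f ^^ n) x) \<xi>) \<le> L ^ n * dist x \<xi>"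
    using iter by (intro always_eventually) simp
  ultimately have "(\<lambda>n. dist ((f ^^ n) x) \<xi>) \<longlonglongrightarrow> 0"
    by (rule Lim_null_comparison[rotated])
  then show ?thesis by (rule tendsto_dist_iff[THEN iffD2])
qed

lemma deriv_numerator_lower_bound:
  fixes a th z :: real
  assumes "0 < k" and "0 < z" and "a * th \<le> z" and "z \<le> a"
  shows "1 - a ^ k * max 0 (real k - 1 - real k * th)
           \<le> 1 + z ^ k - (z - a * th) * (real k * z ^ (k - 1))"
proof -
  define M where "M = max 0 (real k - 1 - real k * th)"
  define w where "w = real k * a * th - (real k - 1) * z"
  have "- a * M \<le> - a * (real k - 1 - real k * th)"
    using assms unfolding M_def by (intro mult_left_mono_neg) auto
  also have "\<dots> \<le> w"
    using assms mult_left_mono[of z a "real k - 1"] unfolding w_def by (auto simp: algebra_simps)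
  finally have "- a * M \<le> w" .
  have "a ^ (k - 1) * (- a * M) \<le> z ^ (k - 1) * (- a * M)"
    using assms unfolding M_def
    by (intro mult_right_mono_neg power_mono) auto
  also have "\<dots> \<le> z ^ (k - 1) * w"
    using \<open>- a * M \<le> w\<close> \<open>0 < z\<close> by (intro mult_left_mono) auto
  finally have "- (a ^ k * M) \<le> z ^ (k - 1) * w"
    using \<open>0 < k\<close> by (cases k) (auto simp: ac_simps)
  moreover have "z ^ k - (z - a * th) * (real k * z ^ (k - 1)) = z ^ (k - 1) * w"
    using \<open>0 < k\<close> unfolding w_def by (cases k) (simp_all add: algebra_simps)
  ultimately show ?thesis unfolding M_def by linarith
qed

lemma contraction_margin_pos:
  fixes lam th :: real
  assumes "0 < k" and "0 < lam"
    and "th \<ge> (real k - 1) / real k \<or>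
         (th < (real k - 1) / real k \<and> lam < 1 / (real k - 1 - real k * th))"
  shows "0 < 1 - lam * max 0 (real k - 1 - real k * th)"
proof (cases "real k - 1 - real k * th \<le> 0")
  case False
  then have "th < (real k - 1) / real k"
    using \<open>0 < k\<close> by (simp add: less_divide_eq mult.commute)
  then have "lam < 1 / (real k - 1 - real k * th)"
    using assms(3) by linarith
  with False show ?thesis by (simp add: less_divide_eq mult.commute)
qed simp

lemma gammaMap_eq:
  assumes "a = root k lam"
  shows "gammaMap k lam th = (\<lambda>u. a * (1 + th) - u + (u - a * th) / (1 + u ^ k))"
  using assms by (simp add: gammaMap_def Let_def fun_eq_iff)

lemma gammaMap_has_field_derivative:
  assumes "a = root k lam" and "0 < u"
  shows "(gammaMap k lam th has_field_derivative
           -1 + (1 + u ^ k - (u - a * th) * (real k * u ^ (k - 1))) / (1 + u ^ k)^2) (at u)"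
proof -
  have "0 < 1 + u ^ k" using \<open>0 < u\<close> by (simp add: add_pos_pos)
  then show ?thesis unfolding gammaMap_eq[OF assms(1)]
    by (auto intro!: derivative_eq_intros simp: power2_eq_square field_simps)
qed

lemma gammaMap_maps_interval:
  assumes "a = root k lam" and "0 \<le> lam" and "0 \<le> th" and "u \<in> {a * th..a}"
  shows "gammaMap k lam th u \<in> {a * th..a}"
proof -
  have "0 \<le> a * th" using assms by (simp add: real_root_ge_zero)
  then have "1 \<le> 1 + u ^ k" using assms(4) by simp
  then have "0 \<le> (u - a * th) / (1 + u ^ k)" and "(u - a * th) / (1 + u ^ k) \<le> u - a * th"
    using assms(4) by (auto simp: divide_le_eq mult_le_cancel_left1)
  then show ?thesis using assms(4) unfolding gammaMap_eq[OF assms(1)] by (auto simp: algebra_simps)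
qed

lemma gammaMap_endpoints:
  assumes "a = root k lam" and "0 < k" and "0 < lam" and "th < 1"
  shows "a * th < gammaMap k lam th (a * th)" and "gammaMap k lam th a < a"
proof -
  have "0 < a" and "a ^ k = lam" using assms by auto
  then have "0 < a - a * th" using \<open>th < 1\<close> by simp
  then have "(a - a * th) / (1 + lam) < a - a * th"
    using \<open>0 < lam\<close> by (simp add: divide_less_eq)
  then show "gammaMap k lam th a < a"
    unfolding gammaMap_eq[OF assms(1)] \<open>a ^ k = lam\<close> by (simp add: algebra_simps)
  show "a * th < gammaMap k lam th (a * th)"
    using \<open>0 < a - a * th\<close> unfolding gammaMap_eq[OF assms(1)] by (simp add: algebra_simps)
qed

lemma gammaMap_deriv_bound:
  assumes "a = root k lam" and "0 < k" and "0 < lam" and "0 < th"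
    and c: "c = 1 - lam * max 0 (real k - 1 - real k * th)" and "0 < c"
    and u: "a * th \<le> u" "u \<le> a"
  shows "\<bar>-1 + (1 + u ^ k - (u - a * th) * (real k * u ^ (k - 1))) / (1 + u ^ k)^2\<bar>
           \<le> 1 - c / (1 + lam)^2"
proof -
  have "0 < a" and "a ^ k = lam" using assms by auto
  then have "0 < u" using u \<open>0 < th\<close> by (meson mult_pos_pos order_less_le_trans)
  define N where "N = 1 + u ^ k - (u - a * th) * (real k * u ^ (k - 1))"
  define D where "D = (1 + u ^ k)^2"
  have "c \<le> N"
    using deriv_numerator_lower_bound[OF \<open>0 < k\<close> \<open>0 < u\<close> u] \<open>a ^ k = lam\<close> unfolding N_def c by simp
  have "u ^ k \<le> lam"
    unfolding \<open>a ^ k = lam\<close>[symmetric] using \<open>0 < u\<close> u(2) by (simp add: power_mono)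
  then have "D \<le> (1 + lam)^2"
    unfolding D_def using \<open>0 < u\<close> by (simp add: power_mono)
  have "1 \<le> 1 + u ^ k" using \<open>0 < u\<close> by simp
  then have "1 + u ^ k \<le> D"
    unfolding D_def power2_eq_square by (simp add: mult_le_cancel_left1)
  with \<open>1 \<le> 1 + u ^ k\<close> have "0 < D" by linarith
  have "0 \<le> (u - a * th) * (real k * u ^ (k - 1))"
    using u \<open>0 < u\<close> by simp
  then have "N \<le> D" using \<open>1 + u ^ k \<le> D\<close> unfolding N_def by linarith
  have "c / (1 + lam)^2 \<le> c / D"
    using \<open>D \<le> (1 + lam)^2\<close> \<open>0 < D\<close> \<open>0 < c\<close> by (simp add: frac_le)
  also have "\<dots> \<le> N / D" using \<open>c \<le> N\<close> \<open>0 < D\<close> by (simp add: divide_right_mono)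
  finally have "c / (1 + lam)^2 \<le> N / D" .
  moreover have "N / D \<le> 1" using \<open>N \<le> D\<close> \<open>0 < D\<close> by simp
  ultimately show ?thesis unfolding N_def[symmetric] D_def[symmetric] by linarith
qed

lemma gammaMap_lipschitz:
  assumes "a = root k lam" and "0 < k" and "0 < lam" and "0 < th"
    and "c = 1 - lam * max 0 (real k - 1 - real k * th)" and "0 < c"
    and "x \<in> {a * th..a}" and "y \<in> {a * th..a}"
  shows "\<bar>gammaMap k lam th x - gammaMap k lam th y\<bar> \<le> (1 - c / (1 + lam)^2) * \<bar>x - y\<bar>"
proof -
  have "0 < a" using assms by auto
  have deriv: "(gammaMap k lam th has_field_derivative
          -1 + (1 + u ^ k - (u - a * th) * (real k * u ^ (k - 1))) / (1 + u ^ k)^2)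
          (at u within {a * th..a})" if "u \<in> {a * th..a}" for u
  proof (rule has_field_derivative_at_within[OF gammaMap_has_field_derivative[OF assms(1)]])
    show "0 < u" using that \<open>0 < a\<close> \<open>0 < th\<close> by (auto intro: order_less_le_trans[OF mult_pos_pos])
  qed
  have bound: "norm (-1 + (1 + u ^ k - (u - a * th) * (real k * u ^ (k - 1))) / (1 + u ^ k)^2)
                 \<le> 1 - c / (1 + lam)^2" if "u \<in> {a * th..a}" for u
    using gammaMap_deriv_bound[OF assms(1-6)] that by simp
  have "norm (gammaMap k lam th x - gammaMap k lam th y) \<le> (1 - c / (1 + lam)^2) * norm (x - y)"
    by (rule field_differentiable_bound[OF convex_real_interval(5) deriv bound assms(7,8)])
  then show ?thesis by simp
qed

lemma gammaMap_contraction: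
  assumes "a = root k lam" and "0 < k" and "0 < lam" and "0 < th"
    and "0 < 1 - lam * max 0 (real k - 1 - real k * th)"
  obtains L where "0 \<le> L" and "L < 1"
    and "\<And>x y. x \<in> {a * th..a} \<Longrightarrow> y \<in> {a * th..a} \<Longrightarrow>
           dist (gammaMap k lam th x) (gammaMap k lam th y) \<le> L * dist x y"
proof
  define c where "c = 1 - lam * max 0 (real k - 1 - real k * th)"
  have "0 < c" using assms(5) unfolding c_def .
  have "c \<le> 1" unfolding c_def using \<open>0 < lam\<close> by simp
  also have "1 \<le> (1 + lam)^2" using \<open>0 < lam\<close> by (intro one_le_power) simp
  finally show "0 \<le> 1 - c / (1 + lam)^2" and "1 - c / (1 + lam)^2 < 1"
    using \<open>0 < c\<close> by (auto simp: divide_le_eq_1 zero_less_divide_iff)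
  show "dist (gammaMap k lam th x) (gammaMap k lam th y) \<le> (1 - c / (1 + lam)^2) * dist x y"
    if "x \<in> {a * th..a}" and "y \<in> {a * th..a}" for x y
    using gammaMap_lipschitz[OF assms(1-4) c_def \<open>0 < c\<close> that] unfolding dist_real_def .
qed

theorem mainTheorem10:
  fixes k :: nat and lam th :: real
  assumes "k \<ge> 2" and "lam > 0" and "0 < th" and "th < 1"
    and "th \<ge> (real k - 1) / real k \<or>
         (th < (real k - 1) / real k \<and> lam < 1 / (real k - 1 - real k * th))"
  shows "let a = root k lam; \<gamma> = gammaMap k lam th in
           (\<forall>u\<in>{a*th..a}. \<gamma> u \<in> {a*th..a}) \<and>
           (\<exists>!\<xi>. \<xi> \<in> {a*th<..<a} \<and> \<gamma> \<xi> = \<xi>) \<and>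
           (\<forall>\<xi>. \<xi> \<in> {a*th<..<a} \<and> \<gamma> \<xi> = \<xi> \<longrightarrow>
              (\<forall>\<xi>0\<in>{a*th..a}. (\<lambda>n. (\<gamma> ^^ n) \<xi>0) \<longlonglongrightarrow> \<xi>))"
proof -
  define a where "a = root k lam"
  let ?\<gamma> = "gammaMap k lam th" and ?I = "{a * th..a}"
  have "0 < k" and "0 < a" using assms(1,2) unfolding a_def by simp_all
  obtain L where L: "0 \<le> L" "L < 1"
    and contr: "\<And>x y. x \<in> ?I \<Longrightarrow> y \<in> ?I \<Longrightarrow> dist (?\<gamma> x) (?\<gamma> y) \<le> L * dist x y"
    using gammaMap_contraction[OF a_def \<open>0 < k\<close> assms(2,3)
        contraction_margin_pos[OF \<open>0 < k\<close> assms(2,5)]] by blast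
  have maps: "?\<gamma> ` ?I \<subseteq> ?I"
    using gammaMap_maps_interval[OF a_def] assms(2,3) by auto
  have "?I \<noteq> {}" and "complete ?I"
    using \<open>0 < a\<close> assms(4) by (simp_all add: complete_eq_closed)
  then obtain \<xi> where \<xi>: "\<xi> \<in> ?I" "?\<gamma> \<xi> = \<xi>"
    and unique: "\<And>\<eta>. \<eta> \<in> ?I \<Longrightarrow> ?\<gamma> \<eta> = \<eta> \<Longrightarrow> \<eta> = \<xi>"
    using Banach_fix[OF _ _ L maps contr] by blast
  have unique_interior: "\<eta> = \<xi>" if "\<eta> \<in> {a * th<..<a}" "?\<gamma> \<eta> = \<eta>" for \<eta>
    using that by (intro unique) auto
  have "\<xi> \<in> {a * th<..<a}"
    using \<xi> gammaMap_endpoints[OF a_def \<open>0 < k\<close> assms(2,4)] by (auto simp: less_le)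
  have "(\<lambda>n. (?\<gamma> ^^ n) x) \<longlonglongrightarrow> \<xi>" if "x \<in> ?I" for x
    using contraction_iterates_tendsto_fixpoint[OF maps L contr \<xi> that] .
  then show ?thesis
    unfolding Let_def a_def[symmetric]
    using maps \<open>\<xi> \<in> {a * th<..<a}\<close> \<xi>(2) unique_interior by blast
qed

end
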